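(* Let $S_{d,n}(x_1,\dots,x_n)=\sum_{1\le i_1\le\cdots\le i_d\le n}x_{i_1}\cdots x_{i_d}$ (complete homogeneous symmetric polynomial; $S_{0,n}=1$). For all $n\ge2$ and $d\ge1$, in the field of rational functions $\mathbb Q(x_1,\dots,x_n)$, $$S_{d,n}=\sum\frac{(-1)^{\alpha(i_2,\dots,i_n)+n}}{(x_2-x_{i_2})(x_3-x_{i_3})\cdots(x_n-x_{i_n})}\,(x_n^{d+n-1}-x_{i_n}^{d+n-1}),$$ the sum running over the $2^{n-2}$ tuples $(i_2,\dots,i_n)$ with $i_2=1$ and $i_{j+1}\in\{j,i_j\}$ for $2\le j\le n-1$, where $\alpha(i_2,\dots,i_n)$ is the number of $j$ with $2\le j\le n-1$ and $i_{j+1}\ne i_j$. *)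

theory Defs
  imports Complex_Main "HOL-Library.FuncSet"
begin

definition hsym :: "nat \<Rightarrow> nat \<Rightarrow> (nat \<Rightarrow> 'a::comm_ring_1) \<Rightarrow> 'a" where
  "hsym d n x = (\<Sum>f \<in> {f \<in> {1..d} \<rightarrow>\<^sub>E {1..n}. mono_on {1..d} f}. \<Prod>k=1..d. x (f k))"

definition tuples :: "nat \<Rightarrow> (nat \<Rightarrow> nat) set" where
  "tuples n = {i \<in> {2..n} \<rightarrow>\<^sub>E {1..n}. i 2 = 1 \<and>
      (\<forall>j \<in> {2..n-1}. i (j+1) = j \<or> i (j+1) = i j)}"

definition alpha :: "nat \<Rightarrow> (nat \<Rightarrow> nat) \<Rightarrow> nat" where
  "alpha n i = card {j \<in> {2..n-1}. i (j+1) \<noteq> i j}"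

end

theory Submission
  imports Defs
begin

(* Write h_e(y_1,...,y_r) for the complete homogeneous symmetric polynomial of degree e, so that
  S_{d,n} = h_d(x_n,...,x_1). Everything rests on the divided-difference identity
    h_{e+1}(Y,p) - h_{e+1}(Y,q) = (p - q) h_e(Y,q,p).
  Group the sum over tuples by tails: let W_k(a) be the sum over the admissible tails
  (i_k,...,i_n) with i_k = a, the denominator running over j = k..n. As i_{k+1} is either a or k,
  W_k(a) = (W_{k+1}(a) - W_{k+1}(k)) / (x_k - x_a), the second term carrying one extra sign change.
  Downward induction on k with the identity gives W_k(a) = (-1)^(n-k) h_{d+k-2}(x_n,...,x_k,x_a),
  and k = 2, a = 1 yields the theorem. *)

fun complete_hom :: "nat \<Rightarrow> 'a::comm_ring_1 list \<Rightarrow> 'a" where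
  "complete_hom 0 ys = 1"
| "complete_hom (Suc d) [] = 0"
| "complete_hom (Suc d) (y # ys) = complete_hom (Suc d) ys + y * complete_hom d (y # ys)"

lemma complete_hom_singleton [simp]: "complete_hom d [y] = y ^ d"
  by (induction d) auto

lemma power_diff_eq_complete_hom: "p ^ Suc e - q ^ Suc e = (p - q) * complete_hom e [q, p]"
proof (induction e)
  case 0
  then show ?case by simp
next
  case (Suc e)
  have "(p - q) * complete_hom (Suc e) [q, p]
      = (p - q) * p ^ Suc e + q * ((p - q) * complete_hom e [q, p])"
    by (simp add: algebra_simps)
  also have "\<dots> = p ^ Suc (Suc e) - q ^ Suc (Suc e)"
    by (simp only: Suc.IH[symmetric]) (simp add: algebra_simps)
  finally show ?case ..
qed

lemma complete_hom_snoc_diff: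
  "complete_hom (Suc e) (ys @ [p]) - complete_hom (Suc e) (ys @ [q])
    = (p - q) * complete_hom e (ys @ [q, p])"
proof (induction ys arbitrary: e)
  case Nil
  show ?case using power_diff_eq_complete_hom by simp
next
  case (Cons y ys)
  show ?case
  proof (induction e)
    case 0
    show ?case using Cons.IH[of 0] by simp
  next
    case (Suc e)
    have "complete_hom (Suc (Suc e)) ((y # ys) @ [p]) - complete_hom (Suc (Suc e)) ((y # ys) @ [q])
       = (complete_hom (Suc (Suc e)) (ys @ [p]) - complete_hom (Suc (Suc e)) (ys @ [q]))
         + y * (complete_hom (Suc e) ((y # ys) @ [p]) - complete_hom (Suc e) ((y # ys) @ [q]))"
      by (simp add: algebra_simps)
    also have "\<dots> = (p - q) * complete_hom (Suc e) (ys @ [q, p])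
        + y * ((p - q) * complete_hom e ((y # ys) @ [q, p]))"
      using Cons.IH[of "Suc e"] Suc.IH by simp
    also have "\<dots> = (p - q) * complete_hom (Suc e) ((y # ys) @ [q, p])"
      by (simp add: algebra_simps)
    finally show ?case .
  qed
qed

definition mono_maps :: "nat \<Rightarrow> nat \<Rightarrow> (nat \<Rightarrow> nat) set" where
  "mono_maps d n = {f \<in> {1..d} \<rightarrow>\<^sub>E {1..n}. mono_on {1..d} f}"

lemma finite_mono_maps: "finite (mono_maps d n)"
  unfolding mono_maps_def
  by (rule finite_subset[of _ "{1..d} \<rightarrow>\<^sub>E {1..n}"]) (auto intro: finite_PiE)

lemma mono_maps_Suc_Suc:
  "mono_maps (Suc d) (Suc n) = mono_maps (Suc d) n \<union> (\<lambda>f. f(Suc d := Suc n)) ` mono_maps d (Suc n)"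
proof (intro equalityI subsetI)
  fix f assume f: "f \<in> mono_maps (Suc d) (Suc n)"
  then have f_range: "f \<in> {1..Suc d} \<rightarrow>\<^sub>E {1..Suc n}" and f_mono: "mono_on {1..Suc d} f"
    unfolding mono_maps_def by auto
  show "f \<in> mono_maps (Suc d) n \<union> (\<lambda>f. f(Suc d := Suc n)) ` mono_maps d (Suc n)"
  proof (cases "f (Suc d) = Suc n")
    case True
    let ?h = "f(Suc d := undefined)"
    have "?h \<in> mono_maps d (Suc n)"
      using f_range f_mono unfolding mono_maps_def
      by (auto simp: PiE_iff extensional_def mono_on_def)
    moreover have "f = ?h(Suc d := Suc n)" by (simp flip: True)
    ultimately show ?thesis by blast
  next
    case False
    have "f (Suc d) \<in> {1..Suc n}" using PiE_mem[OF f_range] by simp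
    then have "f (Suc d) \<le> n" using False by simp
    moreover have "f k \<le> f (Suc d)" if "k \<in> {1..Suc d}" for k
      using mono_onD[OF f_mono that] that by simp
    ultimately have "f k \<in> {1..n}" if "k \<in> {1..Suc d}" for k
      using PiE_mem[OF f_range that] that by force
    then have "f \<in> {1..Suc d} \<rightarrow>\<^sub>E {1..n}"
      using f_range by (simp add: PiE_iff)
    then have "f \<in> mono_maps (Suc d) n"
      using f_mono unfolding mono_maps_def by blast
    then show ?thesis ..
  qed
next
  fix f assume "f \<in> mono_maps (Suc d) n \<union> (\<lambda>f. f(Suc d := Suc n)) ` mono_maps d (Suc n)"
  then show "f \<in> mono_maps (Suc d) (Suc n)"
  proof
    assume "f \<in> mono_maps (Suc d) n"
    then show ?thesis unfolding mono_maps_def by (auto simp: PiE_iff)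
  next
    assume "f \<in> (\<lambda>f. f(Suc d := Suc n)) ` mono_maps d (Suc n)"
    then obtain h where h_range: "h \<in> {1..d} \<rightarrow>\<^sub>E {1..Suc n}" and h_mono: "mono_on {1..d} h"
      and f_def: "f = h(Suc d := Suc n)"
      unfolding mono_maps_def by blast
    have "f \<in> {1..Suc d} \<rightarrow>\<^sub>E {1..Suc n}"
      using h_range unfolding f_def by (auto simp: PiE_iff extensional_def)
    moreover have "f r \<le> f s" if "r \<in> {1..Suc d}" "s \<in> {1..Suc d}" "r \<le> s" for r s
      using that h_range mono_onD[OF h_mono, of r s] unfolding f_def by (auto simp: PiE_iff)
    ultimately show ?thesis
      unfolding mono_maps_def by (auto intro: mono_onI)
  qed
qed

lemma hsym_eq_sum_mono_maps: "hsym d n x = (\<Sum>f \<in> mono_maps d n. \<Prod>k=1..d. x (f k))"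
  unfolding hsym_def mono_maps_def ..

lemma hsym_0 [simp]: "hsym 0 n x = 1"
  unfolding hsym_def by (simp add: mono_on_def monotone_on_def)

lemma hsym_Suc_0 [simp]: "hsym (Suc d) 0 x = 0"
  unfolding hsym_def by (subst PiE_empty_range[of 1]) auto

lemma hsym_Suc_Suc: "hsym (Suc d) (Suc n) x = hsym (Suc d) n x + x (Suc n) * hsym d (Suc n) x"
proof -
  let ?ext = "\<lambda>f. f(Suc d := Suc n)"
  have disjoint: "mono_maps (Suc d) n \<inter> ?ext ` mono_maps d (Suc n) = {}"
    unfolding mono_maps_def by (force dest: PiE_mem[of _ _ _ "Suc d"])
  have undefined_Suc: "f (Suc d) = undefined" if "f \<in> mono_maps d (Suc n)" for f
  proof -
    from that have "f \<in> {1..d} \<rightarrow>\<^sub>E {1..Suc n}" unfolding mono_maps_def by blast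
    from PiE_arb[OF this] show ?thesis by simp
  qed
  have inj: "inj_on ?ext (mono_maps d (Suc n))"
    by (rule inj_onI) (metis undefined_Suc fun_upd_triv fun_upd_upd)
  have "(\<Prod>k=1..Suc d. x (?ext f k)) = x (Suc n) * (\<Prod>k=1..d. x (f k))" for f
    by (simp add: mult.commute)
  then show ?thesis
    unfolding hsym_eq_sum_mono_maps mono_maps_Suc_Suc
    by (simp add: sum.union_disjoint[OF finite_mono_maps finite_imageI[OF finite_mono_maps] disjoint]
        sum.reindex[OF inj] sum_distrib_left del: prod.cl_ivl_Suc)
qed

lemma hsym_eq_complete_hom: "hsym d n x = complete_hom d (rev (map x [1..<Suc n]))"
proof (induction n arbitrary: d)
  case 0
  then show ?case by (cases d) auto
next
  case (Suc n)
  then show ?case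
    by (induction d) (simp_all add: hsym_Suc_Suc)
qed

definition tuples_from :: "nat \<Rightarrow> nat \<Rightarrow> nat \<Rightarrow> (nat \<Rightarrow> nat) set" where
  "tuples_from n k a = {i \<in> {k..n} \<rightarrow>\<^sub>E {1..n}. i k = a \<and>
      (\<forall>j \<in> {k..n-1}. i (j+1) = j \<or> i (j+1) = i j)}"

definition alpha_from :: "nat \<Rightarrow> nat \<Rightarrow> (nat \<Rightarrow> nat) \<Rightarrow> nat" where
  "alpha_from n k i = card {j \<in> {k..n-1}. i (j+1) \<noteq> i j}"

definition tuple_term :: "nat \<Rightarrow> nat \<Rightarrow> (nat \<Rightarrow> 'a::field) \<Rightarrow> nat \<Rightarrow> (nat \<Rightarrow> nat) \<Rightarrow> 'a" where
  "tuple_term n m x k i =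
    (-1) ^ alpha_from n k i / (\<Prod>j=k..n. (x j - x (i j))) * (x n ^ m - x (i n) ^ m)"

definition tuple_sum :: "nat \<Rightarrow> nat \<Rightarrow> (nat \<Rightarrow> 'a::field) \<Rightarrow> nat \<Rightarrow> nat \<Rightarrow> 'a" where
  "tuple_sum n m x k a = (\<Sum>i \<in> tuples_from n k a. tuple_term n m x k i)"

lemma finite_tuples_from: "finite (tuples_from n k a)"
  unfolding tuples_from_def
  by (rule finite_subset[of _ "{k..n} \<rightarrow>\<^sub>E {1..n}"]) (auto intro: finite_PiE)

lemma tuples_from_head: "i \<in> tuples_from n k a \<Longrightarrow> i k = a"
  unfolding tuples_from_def by blast

lemma tuples_from_undefined: "i \<in> tuples_from n k a \<Longrightarrow> j \<notin> {k..n} \<Longrightarrow> i j = undefined"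
  unfolding tuples_from_def by (blast intro: PiE_arb)

lemma tuples_from_last:
  assumes "a \<in> {1..n}"
  shows "tuples_from n n a = {(\<lambda>j. if j = n then a else undefined)}"
  using assms unfolding tuples_from_def by (auto simp: PiE_iff extensional_def fun_eq_iff)

lemma tuples_from_Suc:
  assumes "k < n" "1 \<le> a" "a < k"
  shows "tuples_from n k a = (\<lambda>i. i(k := a)) ` (tuples_from n (Suc k) a \<union> tuples_from n (Suc k) k)"
proof (intro equalityI subsetI)
  fix i assume "i \<in> tuples_from n k a"
  then have i_range: "i \<in> {k..n} \<rightarrow>\<^sub>E {1..n}" and i_head: "i k = a"
    and i_step: "\<And>j. j \<in> {k..n-1} \<Longrightarrow> i (j+1) = j \<or> i (j+1) = i j"
    unfolding tuples_from_def by auto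
  let ?tail = "i(k := undefined)"
  have "?tail \<in> {Suc k..n} \<rightarrow>\<^sub>E {1..n}"
    using i_range by (auto simp: PiE_iff extensional_def)
  moreover have "\<forall>j \<in> {Suc k..n-1}. ?tail (j+1) = j \<or> ?tail (j+1) = ?tail j"
    using i_step by auto
  moreover have "i (Suc k) = k \<or> i (Suc k) = a"
    using i_step[of k] i_head assms by auto
  ultimately have "?tail \<in> tuples_from n (Suc k) a \<union> tuples_from n (Suc k) k"
    unfolding tuples_from_def by auto
  moreover have "i = ?tail(k := a)"
    by (simp flip: i_head)
  ultimately show "i \<in> (\<lambda>i. i(k := a)) ` (tuples_from n (Suc k) a \<union> tuples_from n (Suc k) k)"
    by blast
next
  fix i' assume "i' \<in> (\<lambda>i. i(k := a)) ` (tuples_from n (Suc k) a \<union> tuples_from n (Suc k) k)"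
  then obtain i c where "i \<in> tuples_from n (Suc k) c" and c: "c = a \<or> c = k" and i': "i' = i(k := a)"
    by blast
  then have i_range: "i \<in> {Suc k..n} \<rightarrow>\<^sub>E {1..n}" and i_head: "i (Suc k) = c"
    and i_step: "\<And>j. j \<in> {Suc k..n-1} \<Longrightarrow> i (j+1) = j \<or> i (j+1) = i j"
    unfolding tuples_from_def by auto
  have "i' \<in> {k..n} \<rightarrow>\<^sub>E {1..n}"
    using i_range assms unfolding i' by (auto simp: PiE_iff extensional_def)
  moreover have "i' (j+1) = j \<or> i' (j+1) = i' j" if "j \<in> {k..n-1}" for j
    using that i_head c i_step[of j] unfolding i' by (cases "j = k") auto
  ultimately show "i' \<in> tuples_from n k a"
    unfolding tuples_from_def i' by simp
qed

lemma alpha_from_upd: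
  assumes "k < n" "i \<in> tuples_from n (Suc k) c"
  shows "alpha_from n k (i(k := a)) = alpha_from n (Suc k) i + (if c = a then 0 else 1)"
proof -
  have "{j \<in> {k..n-1}. (i(k := a)) (j+1) \<noteq> (i(k := a)) j}
      = (if c = a then {} else {k}) \<union> {j \<in> {Suc k..n-1}. i (j+1) \<noteq> i j}"
    using assms tuples_from_head[OF assms(2)] by (auto split: if_splits)
  then show ?thesis
    unfolding alpha_from_def by auto
qed

lemma tuple_term_upd:
  assumes "k < n" "i \<in> tuples_from n (Suc k) c"
  shows "tuple_term n m x k (i(k := a))
    = (if c = a then 1 else -1) * tuple_term n m x (Suc k) i / (x k - x a)"
proof -
  have "(\<Prod>j=Suc k..n. x j - x ((i(k := a)) j)) = (\<Prod>j=Suc k..n. x j - x (i j))"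
    by (rule prod.cong) auto
  then have "(\<Prod>j=k..n. x j - x ((i(k := a)) j)) = (x k - x a) * (\<Prod>j=Suc k..n. x j - x (i j))"
    using assms(1) by (simp add: prod.atLeast_Suc_atMost)
  then show ?thesis
    using alpha_from_upd[OF assms, of a] assms(1) unfolding tuple_term_def by (simp add: power_add)
qed

lemma tuple_sum_Suc:
  assumes "k < n" "1 \<le> a" "a < k"
  shows "tuple_sum n m x k a
    = (tuple_sum n m x (Suc k) a - tuple_sum n m x (Suc k) k) / (x k - x a)"
proof -
  let ?upd = "\<lambda>i. i(k := a)" and ?A = "tuples_from n (Suc k) a" and ?K = "tuples_from n (Suc k) k"
  have disjoint: "?A \<inter> ?K = {}"
    using assms(3) tuples_from_head[of _ n "Suc k"] by (metis disjoint_iff less_irrefl)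
  have "i k = undefined" if "i \<in> tuples_from n (Suc k) c" for i c
    using tuples_from_undefined[OF that] by simp
  then have inj: "inj_on ?upd (?A \<union> ?K)"
    by (intro inj_onI) (metis Un_iff fun_upd_triv fun_upd_upd)
  have "tuple_sum n m x k a
      = (\<Sum>i \<in> ?A. tuple_term n m x k (?upd i)) + (\<Sum>i \<in> ?K. tuple_term n m x k (?upd i))"
    unfolding tuple_sum_def tuples_from_Suc[OF assms]
    by (simp add: sum.reindex[OF inj]
        sum.union_disjoint[OF finite_tuples_from finite_tuples_from disjoint])
  also have "\<dots> = (\<Sum>i \<in> ?A. tuple_term n m x (Suc k) i / (x k - x a))
      + (\<Sum>i \<in> ?K. - (tuple_term n m x (Suc k) i / (x k - x a)))"
    using assms(3) by (simp add: tuple_term_upd[OF assms(1)] cong: sum.cong)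
  also have "\<dots> = (tuple_sum n m x (Suc k) a - tuple_sum n m x (Suc k) k) / (x k - x a)"
    unfolding tuple_sum_def by (simp add: sum_divide_distrib sum_negf diff_divide_distrib)
  finally show ?thesis .
qed

lemma tuple_sum_eq_complete_hom:
  fixes x :: "nat \<Rightarrow> 'a::field"
  assumes inj: "inj_on x {1..n}" and "k \<le> n" "2 \<le> k" "1 \<le> a" "a < k"
  shows "tuple_sum n (d+n-1) x k a
    = (-1) ^ (n-k) * complete_hom (d+k-2) (rev (map x [k..<Suc n]) @ [x a])"
  using assms(2-)
proof (induction k arbitrary: a rule: inc_induct)
  case base
  have "x a \<noteq> x n"
    using inj_onD[OF inj, of a n] base by auto
  moreover have "x a ^ (d+n-1) - x n ^ (d+n-1) = (x a - x n) * complete_hom (d+n-2) [x n, x a]"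
    using power_diff_eq_complete_hom[of "x a" "d+n-2" "x n"] base
    by (simp add: Suc_diff_Suc numeral_2_eq_2)
  ultimately have
    "complete_hom (d+n-2) [x n, x a] = (x n ^ (d+n-1) - x a ^ (d+n-1)) / (x n - x a)"
    by (simp add: field_simps)
  moreover have "alpha_from n n (\<lambda>j. if j = n then a else undefined) = 0"
    using base unfolding alpha_from_def by simp
  ultimately show ?case
    using base unfolding tuple_sum_def tuple_term_def by (simp add: tuples_from_last)
next
  case (step k)
  let ?ys = "rev (map x [Suc k..<Suc n])"
  have "1 \<le> a" "a \<le> k" "1 \<le> k"
    using step.prems by auto
  have "x k \<noteq> x a"
    using inj_onD[OF inj, of k a] step by auto
  have degree: "d + Suc k - 2 = Suc (d+k-2)"
    using step by simp
  have IH: "tuple_sum n (d+n-1) x (Suc k) b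
      = (-1) ^ (n - Suc k) * complete_hom (Suc (d+k-2)) (?ys @ [x b])"
    if "1 \<le> b" "b \<le> k" for b
    by (rule step.IH[of b, unfolded degree]) (use step.prems that in auto)
  have "tuple_sum n (d+n-1) x k a
      = (tuple_sum n (d+n-1) x (Suc k) a - tuple_sum n (d+n-1) x (Suc k) k) / (x k - x a)"
    using step by (intro tuple_sum_Suc) auto
  also have "\<dots> = (-1) ^ (n - Suc k) *
      (complete_hom (Suc (d+k-2)) (?ys @ [x a]) - complete_hom (Suc (d+k-2)) (?ys @ [x k])) / (x k - x a)"
    unfolding IH[OF \<open>1 \<le> a\<close> \<open>a \<le> k\<close>] IH[OF \<open>1 \<le> k\<close> order_refl] right_diff_distrib
    by (simp only: mult.assoc)
  also have "\<dots>
      = (-1) ^ (n - Suc k) * (x a - x k) * complete_hom (d+k-2) (?ys @ [x k, x a]) / (x k - x a)"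
    by (simp add: complete_hom_snoc_diff)
  also have "\<dots> = (-1) ^ (n-k) * complete_hom (d+k-2) (rev (map x [k..<Suc n]) @ [x a])"
  proof -
    have "rev (map x [k..<Suc n]) = ?ys @ [x k]"
      using step.hyps by (simp add: upt_conv_Cons)
    moreover have "n - k = Suc (n - Suc k)"
      using step.hyps by simp
    ultimately show ?thesis
      using \<open>x k \<noteq> x a\<close> by (simp add: field_simps)
  qed
  finally show ?case .
qed

theorem mainTheorem3:
  fixes n d :: nat and x :: "nat \<Rightarrow> rat"
  assumes "n \<ge> 2" and "d \<ge> 1" and "inj_on x {1..n}"
  shows "hsym d n x =
    (\<Sum>i \<in> tuples n. (-1) ^ (alpha n i + n) / (\<Prod>j=2..n. (x j - x (i j)))
        * (x n ^ (d+n-1) - x (i n) ^ (d+n-1)))"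
proof -
  have "tuples n = tuples_from n 2 1" "\<And>i. alpha n i = alpha_from n 2 i"
    unfolding tuples_def tuples_from_def alpha_def alpha_from_def by simp_all
  then have sum_eq: "(\<Sum>i \<in> tuples n. (-1) ^ (alpha n i + n) / (\<Prod>j=2..n. (x j - x (i j)))
        * (x n ^ (d+n-1) - x (i n) ^ (d+n-1))) = (-1) ^ n * tuple_sum n (d+n-1) x 2 1"
    unfolding tuple_sum_def tuple_term_def sum_distrib_left by (simp add: power_add mult_ac)
  have "rev (map x [1..<Suc n]) = rev (map x [2..<Suc n]) @ [x 1]"
    using assms(1) by (simp add: upt_conv_Cons numeral_2_eq_2)
  then have closed_form:
    "tuple_sum n (d+n-1) x 2 1 = (-1) ^ (n-2) * complete_hom d (rev (map x [1..<Suc n]))"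
    using tuple_sum_eq_complete_hom[OF assms(3,1), of 1 d] by simp
  obtain m where "n = m + 2"
    using assms(1) le_Suc_ex by (metis add.commute)
  then have "(-1) ^ n * (-1) ^ (n-2) = (1::rat)"
    by (simp flip: power_add add: power_mult_distrib)
  then show ?thesis
    unfolding sum_eq closed_form hsym_eq_complete_hom by (simp only: mult.assoc[symmetric] mult_1)
qed

end
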